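(* Let $\mathcal M$ be a right Hilbert $C^*$-module over a $C^*$-algebra $A$, let $\mathbb K(\mathcal M)$ be the $C^*$-algebra of compact operators on $\mathcal M$, and let $\mathcal N \subset \mathcal M$ be a closed submodule. Put $J_{\mathcal N} = \{ T \in \mathbb K(\mathcal M) \mid \operatorname{Ran} T \subset \mathcal N \}$, a closed right ideal of $\mathbb K(\mathcal M)$. Then $\mathcal N$ is topologically essential in $\mathcal M$ if and only if $J_{\mathcal N}$ is a topologically essential right ideal of $\mathbb K(\mathcal M)$.
   Context: $\mathbb K(\mathcal M)$ denotes the norm closure of the linear span of the operators $\Theta_{x,y}(z) = x\langle y, z\rangle$, $x,y \in \mathcal M$. A closed submodule $\mathcal N$ of a Hilbert $A$-module $\mathcal M$ is topologically essential if for every nonzero closed submodule $\mathcal K \subset \mathcal M$ one has $\mathcal N \cap \mathcal K \neq \{0\}$. A closed right ideal $J$ of a $C^*$-algebra $B$ is topologically essential if for every nonzero closed right ideal $K \subset B$ one has $J \cap K \neq \{0\}$ (i.e. the module definition applied to $B$ as a right Hilbert module over itself). *)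

theory Defs
  imports "HOL-Analysis.Analysis"
begin

definition complex_scalar :: "(complex \<Rightarrow> 'v::real_vector \<Rightarrow> 'v) \<Rightarrow> bool" where
  "complex_scalar sc \<longleftrightarrow>
     (\<forall>r x. sc (complex_of_real r) x = r *\<^sub>R x) \<and>
     (\<forall>c d x. sc (c * d) x = sc c (sc d x)) \<and>
     (\<forall>c d x. sc (c + d) x = sc c x + sc d x) \<and>
     (\<forall>c x y. sc c (x + y) = sc c x + sc c y)"

text \<open>A (not necessarily unital) C*-algebra: a real Banach algebra with a compatible
  complex scalar multiplication and an involution satisfying the C*-identity.\<close>
definition cstar_algebra ::
  "(complex \<Rightarrow> 'a::{real_normed_algebra,banach} \<Rightarrow> 'a) \<Rightarrow> ('a \<Rightarrow> 'a) \<Rightarrow> bool" where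
  "cstar_algebra sc st \<longleftrightarrow>
     complex_scalar sc \<and>
     (\<forall>c x y. sc c (x * y) = sc c x * y \<and> sc c (x * y) = x * sc c y) \<and>
     (\<forall>c x. norm (sc c x) = cmod c * norm x) \<and>
     (\<forall>x. st (st x) = x) \<and>
     (\<forall>x y. st (x + y) = st x + st y) \<and>
     (\<forall>c x. st (sc c x) = sc (cnj c) (st x)) \<and>
     (\<forall>x y. st (x * y) = st y * st x) \<and>
     (\<forall>x. norm (st x * x) = (norm x)\<^sup>2)"

definition cstar_positive :: "('a::{real_normed_algebra} \<Rightarrow> 'a) \<Rightarrow> 'a \<Rightarrow> bool" where
  "cstar_positive st a \<longleftrightarrow> (\<exists>b. a = st b * b)"

text \<open>Right Hilbert C*-module: scM complex scalars on M, rm right A-action, ip the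
  A-valued inner product (linear in the second variable); the norm of M is the one
  induced by the inner product, and M is complete.\<close>
definition hilbert_module ::
  "(complex \<Rightarrow> 'a::{real_normed_algebra,banach} \<Rightarrow> 'a) \<Rightarrow> ('a \<Rightarrow> 'a)
   \<Rightarrow> (complex \<Rightarrow> 'm::banach \<Rightarrow> 'm) \<Rightarrow> ('m \<Rightarrow> 'a \<Rightarrow> 'm) \<Rightarrow> ('m \<Rightarrow> 'm \<Rightarrow> 'a) \<Rightarrow> bool" where
  "hilbert_module sc st scM rm ip \<longleftrightarrow>
     cstar_algebra sc st \<and> complex_scalar scM \<and>
     (\<forall>x y a. rm (x + y) a = rm x a + rm y a) \<and>
     (\<forall>x a b. rm x (a + b) = rm x a + rm x b) \<and>
     (\<forall>x a b. rm x (a * b) = rm (rm x a) b) \<and>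
     (\<forall>c x a. rm (scM c x) a = scM c (rm x a) \<and> rm x (sc c a) = scM c (rm x a)) \<and>
     (\<forall>x y z. ip x (y + z) = ip x y + ip x z) \<and>
     (\<forall>c x y. ip x (scM c y) = sc c (ip x y)) \<and>
     (\<forall>x y a. ip x (rm y a) = ip x y * a) \<and>
     (\<forall>x y. ip y x = st (ip x y)) \<and>
     (\<forall>x. cstar_positive st (ip x x)) \<and>
     (\<forall>x. ip x x = 0 \<longrightarrow> x = 0) \<and>
     (\<forall>x. norm x = sqrt (norm (ip x x)))"

definition closed_submodule ::
  "(complex \<Rightarrow> 'm::real_normed_vector \<Rightarrow> 'm) \<Rightarrow> ('m \<Rightarrow> 'a \<Rightarrow> 'm) \<Rightarrow> 'm set \<Rightarrow> bool" where
  "closed_submodule scM rm N \<longleftrightarrow>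
     closed N \<and> 0 \<in> N \<and> (\<forall>x\<in>N. \<forall>y\<in>N. x + y \<in> N) \<and>
     (\<forall>c. \<forall>x\<in>N. scM c x \<in> N) \<and> (\<forall>x\<in>N. \<forall>a. rm x a \<in> N)"

definition top_essential_submodule ::
  "(complex \<Rightarrow> 'm::real_normed_vector \<Rightarrow> 'm) \<Rightarrow> ('m \<Rightarrow> 'a \<Rightarrow> 'm) \<Rightarrow> 'm set \<Rightarrow> bool" where
  "top_essential_submodule scM rm N \<longleftrightarrow>
     (\<forall>K. closed_submodule scM rm K \<and> K \<noteq> {0} \<longrightarrow> N \<inter> K \<noteq> {0})"

definition opdist_le :: "('m::real_normed_vector \<Rightarrow> 'm) \<Rightarrow> ('m \<Rightarrow> 'm) \<Rightarrow> real \<Rightarrow> bool" where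
  "opdist_le T S e \<longleftrightarrow> (\<forall>z. norm (T z - S z) \<le> e * norm z)"

definition theta_span ::
  "(complex \<Rightarrow> 'm::real_normed_vector \<Rightarrow> 'm) \<Rightarrow> ('m \<Rightarrow> 'a \<Rightarrow> 'm) \<Rightarrow> ('m \<Rightarrow> 'm \<Rightarrow> 'a)
   \<Rightarrow> ('m \<Rightarrow> 'm) set" where
  "theta_span scM rm ip =
     {F. \<exists>(n::nat) c x y. F = (\<lambda>z. \<Sum>i<n. scM (c i) (rm (x i) (ip (y i) z)))}"

text \<open>K(M): the norm closure of theta_span (in operator norm).\<close>
definition compact_ops ::
  "(complex \<Rightarrow> 'm::real_normed_vector \<Rightarrow> 'm) \<Rightarrow> ('m \<Rightarrow> 'a \<Rightarrow> 'm) \<Rightarrow> ('m \<Rightarrow> 'm \<Rightarrow> 'a)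
   \<Rightarrow> ('m \<Rightarrow> 'm) set" where
  "compact_ops scM rm ip =
     {T. \<forall>e>0. \<exists>F\<in>theta_span scM rm ip. opdist_le T F e}"

text \<open>Closed right ideals of K(M) (= closed submodules of K(M) as a right module over itself);
  multiplication in K(M) is composition.\<close>
definition closed_right_ideal ::
  "(complex \<Rightarrow> 'm::real_normed_vector \<Rightarrow> 'm) \<Rightarrow> ('m \<Rightarrow> 'a \<Rightarrow> 'm) \<Rightarrow> ('m \<Rightarrow> 'm \<Rightarrow> 'a)
   \<Rightarrow> ('m \<Rightarrow> 'm) set \<Rightarrow> bool" where
  "closed_right_ideal scM rm ip K \<longleftrightarrow>
     K \<subseteq> compact_ops scM rm ip \<and>
     (\<lambda>_. 0) \<in> K \<and>
     (\<forall>T\<in>K. \<forall>S\<in>K. (\<lambda>z. T z + S z) \<in> K) \<and>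
     (\<forall>c. \<forall>T\<in>K. (\<lambda>z. scM c (T z)) \<in> K) \<and>
     (\<forall>T\<in>K. \<forall>S\<in>compact_ops scM rm ip. T \<circ> S \<in> K) \<and>
     (\<forall>T\<in>compact_ops scM rm ip. (\<forall>e>0. \<exists>S\<in>K. opdist_le T S e) \<longrightarrow> T \<in> K)"

definition top_essential_right_ideal ::
  "(complex \<Rightarrow> 'm::real_normed_vector \<Rightarrow> 'm) \<Rightarrow> ('m \<Rightarrow> 'a \<Rightarrow> 'm) \<Rightarrow> ('m \<Rightarrow> 'm \<Rightarrow> 'a)
   \<Rightarrow> ('m \<Rightarrow> 'm) set \<Rightarrow> bool" where
  "top_essential_right_ideal scM rm ip J \<longleftrightarrow>
     (\<forall>K. closed_right_ideal scM rm ip K \<and> K \<noteq> {\<lambda>_. 0} \<longrightarrow> J \<inter> K \<noteq> {\<lambda>_. 0})"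

definition J_of ::
  "(complex \<Rightarrow> 'm::real_normed_vector \<Rightarrow> 'm) \<Rightarrow> ('m \<Rightarrow> 'a \<Rightarrow> 'm) \<Rightarrow> ('m \<Rightarrow> 'm \<Rightarrow> 'a)
   \<Rightarrow> 'm set \<Rightarrow> ('m \<Rightarrow> 'm) set" where
  "J_of scM rm ip N = {T \<in> compact_ops scM rm ip. range T \<subseteq> N}"

end

theory Submission
  imports Defs
begin

(* The bridge between submodules and right ideals is the family of rank-one operators
   theta x y = x<y, _>: for x in N it lies in J_N, and theta x x \<noteq> 0 when x \<noteq> 0, since
   <x,x>^2 = <x,x>* <x,x> and the C*-identity give <x,x> = 0 otherwise.
   If N is essential and K is a nonzero closed right ideal, the vectors x with theta x y \<in> K
   for all y form a closed submodule, which is nonzero because T \<circ> theta z y = theta (T z) y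
   for T \<in> K; a nonzero x in its intersection with N yields 0 \<noteq> theta x x \<in> J_N \<inter> K.
   Conversely, for a nonzero closed submodule K, J_K is a nonzero closed right ideal, and any
   nonzero T \<in> J_N \<inter> J_K takes a nonzero value in N \<inter> K. *)

lemma sum_lessThan_add_nat:
  fixes f :: "nat \<Rightarrow> 'b::comm_monoid_add"
  shows "(\<Sum>i<n + m. f i) = (\<Sum>i<n. f i) + (\<Sum>i<m. f (n + i))"
  by (induction m) (simp_all add: add.assoc)

lemma opdist_le_mono: "opdist_le T S e \<Longrightarrow> e \<le> e' \<Longrightarrow> opdist_le T S e'"
  unfolding opdist_le_def by (meson mult_right_mono norm_ge_zero order_trans)

lemma opdist_le_add:
  "opdist_le T F e \<Longrightarrow> opdist_le S G d \<Longrightarrow> opdist_le (\<lambda>z. T z + S z) (\<lambda>z. F z + G z) (e + d)"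
  unfolding opdist_le_def distrib_right by (meson add_mono norm_diff_triangle_ineq order_trans)

lemma opdist_le_comp_left:
  assumes "linear T" and "\<And>x. norm (T x) \<le> norm x * K" and "K \<ge> 0" and "opdist_le S G e"
  shows "opdist_le (T \<circ> S) (T \<circ> G) (K * e)"
  unfolding opdist_le_def
proof
  fix z
  have "norm (T (S z) - T (G z)) \<le> norm (S z - G z) * K"
    using assms(1,2) by (simp flip: linear_diff)
  also have "\<dots> \<le> e * norm z * K"
    using assms(3,4) unfolding opdist_le_def by (simp add: mult_right_mono)
  finally show "norm ((T \<circ> S) z - (T \<circ> G) z) \<le> K * e * norm z"
    by (simp add: mult_ac)
qed

lemma opdist_le_approx_scaled:
  assumes "\<forall>e>0. \<exists>S\<in>A. opdist_le T S (C * e)"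
  shows "\<forall>e>0. \<exists>S\<in>A. opdist_le T S e"
proof (intro allI impI)
  fix e :: real
  assume "e > 0"
  define e' where "e' = e / (\<bar>C\<bar> + 1)"
  have "e' > 0"
    unfolding e'_def using \<open>e > 0\<close> by (intro divide_pos_pos) auto
  with assms obtain S where "S \<in> A" and S: "opdist_le T S (C * e')"
    by blast
  have "C * e' \<le> (\<bar>C\<bar> + 1) * e'"
    using \<open>e' > 0\<close> by (intro mult_right_mono) auto
  also have "\<dots> = e"
    unfolding e'_def by simp
  finally have "C * e' \<le> e" .
  with \<open>S \<in> A\<close> S show "\<exists>S\<in>A. opdist_le T S e" by (blast intro: opdist_le_mono)
qed

lemma opdist_le_approx_seq:
  assumes "\<forall>e>0. \<exists>S\<in>A. opdist_le T S e"
  obtains F where "\<And>k. F k \<in> A" and "\<And>z. (\<lambda>k. F k z) \<longlonglongrightarrow> T z"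
proof -
  have "\<forall>k. \<exists>S\<in>A. opdist_le T S (inverse (real (Suc k)))"
    using assms by simp
  then obtain F where F: "\<And>k. F k \<in> A" "\<And>k. opdist_le T (F k) (inverse (real (Suc k)))"
    by metis
  have "(\<lambda>k. F k z) \<longlonglongrightarrow> T z" for z
  proof (rule LIM_zero_cancel, rule Lim_null_comparison)
    show "\<forall>\<^sub>F k in sequentially. norm (F k z - T z) \<le> inverse (real (Suc k)) * norm z"
      using F(2) unfolding opdist_le_def by (simp add: norm_minus_commute)
    show "(\<lambda>k. inverse (real (Suc k)) * norm z) \<longlonglongrightarrow> 0"
      by (intro tendsto_mult_left_zero LIMSEQ_inverse_real_of_nat)
  qed
  with F(1) show ?thesis using that by blast
qed

lemma opdist_le_approx_of_tendsto:
  assumes "\<And>n. F n \<in> A" and "\<And>n. opdist_le T (F n) (d n)" and "d \<longlonglongrightarrow> 0"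
  shows "\<forall>e>0. \<exists>S\<in>A. opdist_le T S e"
proof (intro allI impI)
  fix e :: real
  assume "e > 0"
  then obtain n where "d n < e"
    using order_tendstoD(2)[OF assms(3)] by (metis eventually_sequentially order_refl)
  then show "\<exists>S\<in>A. opdist_le T S e"
    using assms(1,2) by (meson less_imp_le opdist_le_mono)
qed

section \<open>Hilbert C*-modules\<close>

(* The axioms of hilbert_module that are used; positivity of ip x x is not among them. *)
locale hilbert_cstar_module =
  fixes sc :: "complex \<Rightarrow> 'a::{real_normed_algebra,banach} \<Rightarrow> 'a"
    and st :: "'a \<Rightarrow> 'a"
    and scM :: "complex \<Rightarrow> 'm::banach \<Rightarrow> 'm"
    and rm :: "'m \<Rightarrow> 'a \<Rightarrow> 'm"
    and ip :: "'m \<Rightarrow> 'm \<Rightarrow> 'a"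
  assumes sc_of_real: "sc (complex_of_real r) a = r *\<^sub>R a"
    and sc_mult: "sc (c * d) a = sc c (sc d a)"
    and sc_add: "sc c (a + b) = sc c a + sc c b"
    and norm_sc: "norm (sc c a) = cmod c * norm a"
    and st_st: "st (st a) = a"
    and st_add: "st (a + b) = st a + st b"
    and st_sc: "st (sc c a) = sc (cnj c) (st a)"
    and st_mult: "st (a * b) = st b * st a"
    and norm_st_mult_self: "norm (st a * a) = (norm a)\<^sup>2"
    and scM_of_real: "scM (complex_of_real r) x = r *\<^sub>R x"
    and scM_mult: "scM (c * d) x = scM c (scM d x)"
    and scM_add: "scM c (x + y) = scM c x + scM c y"
    and rm_add_left: "rm (x + y) a = rm x a + rm y a"
    and rm_add_right: "rm x (a + b) = rm x a + rm x b"
    and rm_mult: "rm x (a * b) = rm (rm x a) b"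
    and rm_scM: "rm (scM c x) a = scM c (rm x a)"
    and rm_sc: "rm x (sc c a) = scM c (rm x a)"
    and ip_add_right: "ip x (y + z) = ip x y + ip x z"
    and ip_scM_right: "ip x (scM c y) = sc c (ip x y)"
    and ip_rm_right: "ip x (rm y a) = ip x y * a"
    and ip_swap: "ip y x = st (ip x y)"
    and ip_self_eq_0: "ip x x = 0 \<Longrightarrow> x = 0"
    and norm_eq_sqrt_ip: "norm x = sqrt (norm (ip x x))"

lemma hilbert_module_imp_hilbert_cstar_module:
  "hilbert_module sc st scM rm ip \<Longrightarrow> hilbert_cstar_module sc st scM rm ip"
  unfolding hilbert_module_def cstar_algebra_def complex_scalar_def
  by unfold_locales meson+

context hilbert_cstar_module
begin

lemma linear_sc: "linear (sc c)"
  by (rule linearI) (simp_all add: sc_add flip: sc_of_real sc_mult, simp add: mult.commute)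

lemma linear_st: "linear st"
  by (rule linearI) (simp_all add: st_add flip: sc_of_real, simp add: st_sc)

lemma linear_scM: "linear (scM c)"
  by (rule linearI) (simp_all add: scM_add flip: scM_of_real scM_mult, simp add: mult.commute)

lemma linear_rm_left: "linear (\<lambda>x. rm x a)"
  by (rule linearI) (simp_all add: rm_add_left rm_scM flip: scM_of_real)

lemma linear_rm_right: "linear (rm x)"
  by (rule linearI) (simp_all add: rm_add_right rm_sc flip: scM_of_real sc_of_real)

lemma linear_ip_right: "linear (ip x)"
  by (rule linearI) (simp_all add: ip_add_right ip_scM_right flip: scM_of_real sc_of_real)

lemma linear_ip_left: "linear (\<lambda>x. ip x y)"
  by (rule linearI) (simp_all add: ip_swap[of _ y] linear_add[OF linear_st]
      linear_scale[OF linear_st] linear_add[OF linear_ip_right] linear_scale[OF linear_ip_right])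

lemma ip_scM_left: "ip (scM c x) y = sc (cnj c) (ip x y)"
  by (metis ip_swap ip_scM_right st_sc)

lemma ip_rm_left: "ip (rm x a) y = st a * ip x y"
  by (metis ip_swap ip_rm_right st_mult st_st)

lemma norm_st: "norm (st a) = norm a"
proof -
  have le: "norm b \<le> norm (st b)" for b
  proof (cases "b = 0")
    case False
    have "(norm b)\<^sup>2 \<le> norm (st b) * norm b"
      using norm_st_mult_self[of b] norm_mult_ineq[of "st b" b] by simp
    with False show ?thesis
      by (simp add: power2_eq_square)
  qed (simp add: linear_0[OF linear_st])
  show ?thesis
    using le[of a] le[of "st a"] st_st[of a] by simp
qed

lemma norm_ip_self: "norm (ip x x) = (norm x)\<^sup>2"
  using norm_eq_sqrt_ip[of x] by simp

lemma norm_rm_le: "norm (rm x a) \<le> norm x * norm a"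
proof -
  have "(norm (rm x a))\<^sup>2 = norm (st a * ip x x * a)"
    by (simp add: ip_rm_left ip_rm_right mult.assoc flip: norm_ip_self)
  also have "\<dots> \<le> norm (st a) * norm (ip x x) * norm a"
    by (meson norm_mult_ineq mult_right_mono norm_ge_zero order_trans)
  also have "\<dots> = (norm x * norm a)\<^sup>2"
    by (simp add: norm_st norm_ip_self power2_eq_square)
  finally show ?thesis
    by (simp add: power2_le_iff_abs_le)
qed

lemma norm_scM: "norm (scM c x) = cmod c * norm x"
proof -
  have "(norm (scM c x))\<^sup>2 = norm (sc (c * cnj c) (ip x x))"
    by (simp add: ip_scM_left ip_scM_right sc_mult flip: norm_ip_self)
  also have "\<dots> = (cmod c * norm x)\<^sup>2"
    by (simp add: norm_sc norm_mult norm_ip_self power_mult_distrib power2_eq_square)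
  finally show ?thesis
    by (simp add: power2_eq_iff_nonneg)
qed

(* Polarization bounds ip without positivity; the resulting constant 4 in norm_ip_le, where
   Cauchy-Schwarz would give 1, is harmless since only boundedness is needed. *)
lemma norm_ip_le_sum_sq: "norm (ip x y) \<le> (norm x + norm y)\<^sup>2"
proof -
  have sym_part: "norm (ip u v + ip v u) \<le> (norm u + norm v)\<^sup>2" for u v
  proof -
    have "2 *\<^sub>R (ip u v + ip v u) = ip (u + v) (u + v) - ip (u - v) (u - v)"
      by (simp add: linear_add[OF linear_ip_left] linear_diff[OF linear_ip_left]
          linear_add[OF linear_ip_right] linear_diff[OF linear_ip_right] scaleR_2)
    then have "2 * norm (ip u v + ip v u) \<le> (norm (u + v))\<^sup>2 + (norm (u - v))\<^sup>2"
      by (metis norm_scaleR abs_numeral norm_triangle_ineq4 norm_ip_self)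
    also have "\<dots> \<le> (norm u + norm v)\<^sup>2 + (norm u + norm v)\<^sup>2"
      by (intro add_mono power_mono norm_triangle_ineq norm_triangle_ineq4) auto
    finally show ?thesis
      by simp
  qed
  have "sc \<i> (ip x y - ip y x) = ip x (scM \<i> y) + ip (scM \<i> y) x"
  proof -
    have "sc (- \<i>) a = - sc \<i> a" for a
      using sc_mult[of "- 1" \<i> a] sc_of_real[of "- 1" "sc \<i> a"] by simp
    then show ?thesis
      by (simp add: ip_scM_left ip_scM_right linear_diff[OF linear_sc])
  qed
  then have "norm (ip x y - ip y x) = norm (ip x (scM \<i> y) + ip (scM \<i> y) x)"
    by (metis norm_sc norm_ii mult_1)
  also have "\<dots> \<le> (norm x + norm y)\<^sup>2"
    using sym_part[of x "scM \<i> y"] by (simp add: norm_scM)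
  finally have "norm (ip x y - ip y x) \<le> (norm x + norm y)\<^sup>2" .
  moreover have "2 * norm (ip x y) \<le> norm (ip x y + ip y x) + norm (ip x y - ip y x)"
    using norm_triangle_ineq[of "ip x y + ip y x" "ip x y - ip y x"]
    by (simp add: scaleR_2[symmetric])
  ultimately show ?thesis
    using sym_part[of x y] by simp
qed

lemma norm_ip_le: "norm (ip x y) \<le> 4 * norm x * norm y"
proof (cases "x = 0 \<or> y = 0")
  case True
  then show ?thesis
    by (auto simp: linear_0[OF linear_ip_left] linear_0[OF linear_ip_right])
next
  case False
  then have "norm x > 0" "norm y > 0"
    by auto
  have "norm (ip x y) / (norm x * norm y) = norm (ip ((1 / norm x) *\<^sub>R x) ((1 / norm y) *\<^sub>R y))"
    by (simp add: linear_scale[OF linear_ip_left] linear_scale[OF linear_ip_right])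
  also have "\<dots> \<le> (norm ((1 / norm x) *\<^sub>R x) + norm ((1 / norm y) *\<^sub>R y))\<^sup>2"
    by (rule norm_ip_le_sum_sq)
  also have "\<dots> = 4"
    using \<open>norm x > 0\<close> \<open>norm y > 0\<close> by simp
  finally show ?thesis
    using \<open>norm x > 0\<close> \<open>norm y > 0\<close> by (simp add: divide_le_eq mult.assoc)
qed

lemma bounded_bilinear_rm: "bounded_bilinear rm"
proof
  show "\<exists>K. \<forall>x a. norm (rm x a) \<le> norm x * norm a * K"
    using norm_rm_le by (intro exI[of _ 1]) simp
qed (simp_all add: rm_add_left rm_add_right linear_scale[OF linear_rm_left]
    linear_scale[OF linear_rm_right])

lemma bounded_linear_scM: "bounded_linear (scM c)"
  by (rule bounded_linear_intro[where K = "cmod c"])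
    (simp_all add: linear_add[OF linear_scM] linear_scale[OF linear_scM] norm_scM mult.commute)

lemma bounded_linear_ip_right: "bounded_linear (ip y)"
  by (rule bounded_linear_intro[where K = "4 * norm y"])
    (simp_all add: linear_add[OF linear_ip_right] linear_scale[OF linear_ip_right],
      use norm_ip_le[of y] in \<open>simp add: mult_ac\<close>)

section \<open>Compact operators\<close>

definition theta :: "'m \<Rightarrow> 'm \<Rightarrow> 'm \<Rightarrow> 'm" where
  "theta x y z = rm x (ip y z)"

definition module_map :: "('m \<Rightarrow> 'm) \<Rightarrow> bool" where
  "module_map T \<longleftrightarrow> (\<forall>z w. T (z + w) = T z + T w) \<and> (\<forall>c z. T (scM c z) = scM c (T z)) \<and>
     (\<forall>z a. T (rm z a) = rm (T z) a)"

lemma module_map_linear: "module_map T \<Longrightarrow> linear T"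
  unfolding module_map_def by (intro linearI) (simp_all flip: scM_of_real)

lemma module_map_limit:
  assumes F: "\<And>k. module_map (F k)" and lim: "\<And>z. (\<lambda>k. F k z) \<longlonglongrightarrow> T z"
  shows "module_map T"
  unfolding module_map_def
proof (intro conjI allI)
  fix z w c a
  have "(\<lambda>k. F k (z + w)) \<longlonglongrightarrow> T z + T w"
    using tendsto_add[OF lim lim] F by (simp add: module_map_def)
  then show "T (z + w) = T z + T w"
    by (rule LIMSEQ_unique[OF lim])
  have "(\<lambda>k. F k (scM c z)) \<longlonglongrightarrow> scM c (T z)"
    using bounded_linear.tendsto[OF bounded_linear_scM lim] F by (simp add: module_map_def)
  then show "T (scM c z) = scM c (T z)"
    by (rule LIMSEQ_unique[OF lim])
  have "(\<lambda>k. F k (rm z a)) \<longlonglongrightarrow> rm (T z) a"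
    using bounded_bilinear.tendsto[OF bounded_bilinear_rm lim tendsto_const] F
    by (simp add: module_map_def)
  then show "T (rm z a) = rm (T z) a"
    by (rule LIMSEQ_unique[OF lim])
qed

lemma theta_spanI:
  "F = (\<lambda>z. \<Sum>i<(n::nat). scM (c i) (rm (x i) (ip (y i) z))) \<Longrightarrow> F \<in> theta_span scM rm ip"
  unfolding theta_span_def by blast

lemma theta_spanE:
  assumes "F \<in> theta_span scM rm ip"
  obtains c x y and n :: nat where "F = (\<lambda>z. \<Sum>i<n. scM (c i) (rm (x i) (ip (y i) z)))"
  using assms unfolding theta_span_def by blast

lemma module_map_theta_span:
  assumes "F \<in> theta_span scM rm ip"
  shows "module_map F"
proof -
  obtain c x y and n :: nat where F: "F = (\<lambda>z. \<Sum>i<n. scM (c i) (rm (x i) (ip (y i) z)))"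
    using assms by (rule theta_spanE)
  have "scM d (F z) = F (scM d z)" for d z
    by (simp add: F ip_scM_right rm_sc linear_sum[OF linear_scM] flip: scM_mult)
      (simp add: mult.commute)
  then show ?thesis
    unfolding module_map_def
    by (simp add: F ip_add_right rm_add_right scM_add sum.distrib ip_rm_right rm_mult rm_scM
        linear_sum[OF linear_rm_left])
qed

lemma bounded_linear_theta_span:
  assumes "F \<in> theta_span scM rm ip"
  shows "bounded_linear F"
proof -
  obtain c x y and n :: nat where F: "F = (\<lambda>z. \<Sum>i<n. scM (c i) (rm (x i) (ip (y i) z)))"
    using assms by (rule theta_spanE)
  show ?thesis
    unfolding F
    by (intro bounded_linear_sum bounded_linear_compose[OF bounded_linear_scM]
        bounded_linear_compose[OF bounded_bilinear.bounded_linear_right[OF bounded_bilinear_rm]]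
        bounded_linear_ip_right)
qed

lemma theta_span_add:
  assumes "F \<in> theta_span scM rm ip" and "G \<in> theta_span scM rm ip"
  shows "(\<lambda>z. F z + G z) \<in> theta_span scM rm ip"
proof -
  obtain c x y and n :: nat where F: "F = (\<lambda>z. \<Sum>i<n. scM (c i) (rm (x i) (ip (y i) z)))"
    using assms(1) by (rule theta_spanE)
  obtain d u v and m :: nat where G: "G = (\<lambda>z. \<Sum>i<m. scM (d i) (rm (u i) (ip (v i) z)))"
    using assms(2) by (rule theta_spanE)
  define c' where "c' i = (if i < n then c i else d (i - n))" for i
  define x' where "x' i = (if i < n then x i else u (i - n))" for i
  define y' where "y' i = (if i < n then y i else v (i - n))" for i
  have "(\<lambda>z. F z + G z) = (\<lambda>z. \<Sum>i<n + m. scM (c' i) (rm (x' i) (ip (y' i) z)))"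
    by (simp add: F G sum_lessThan_add_nat c'_def x'_def y'_def)
  then show ?thesis
    by (rule theta_spanI)
qed

lemma theta_span_scM:
  assumes "F \<in> theta_span scM rm ip"
  shows "(\<lambda>z. scM a (F z)) \<in> theta_span scM rm ip"
proof -
  obtain c x y and n :: nat where F: "F = (\<lambda>z. \<Sum>i<n. scM (c i) (rm (x i) (ip (y i) z)))"
    using assms by (rule theta_spanE)
  have "(\<lambda>z. scM a (F z)) = (\<lambda>z. \<Sum>i<n. scM (a * c i) (rm (x i) (ip (y i) z)))"
    by (simp add: F linear_sum[OF linear_scM] scM_mult)
  then show ?thesis
    by (rule theta_spanI)
qed

lemma theta_span_comp:
  assumes "module_map T" and "F \<in> theta_span scM rm ip"
  shows "T \<circ> F \<in> theta_span scM rm ip"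
proof -
  obtain c x y and n :: nat where F: "F = (\<lambda>z. \<Sum>i<n. scM (c i) (rm (x i) (ip (y i) z)))"
    using assms(2) by (rule theta_spanE)
  have "T \<circ> F = (\<lambda>z. \<Sum>i<n. scM (c i) (rm (T (x i)) (ip (y i) z)))"
    using assms(1) by (simp add: F o_def linear_sum[OF module_map_linear]) (simp add: module_map_def)
  then show ?thesis
    by (rule theta_spanI)
qed

lemma theta_span_subset_compact_ops: "theta_span scM rm ip \<subseteq> compact_ops scM rm ip"
  unfolding compact_ops_def opdist_le_def by force

lemma compact_opsI:
  assumes "\<And>e. e > 0 \<Longrightarrow> \<exists>F\<in>theta_span scM rm ip. opdist_le T F (C * e)"
  shows "T \<in> compact_ops scM rm ip"
  using opdist_le_approx_scaled[of "theta_span scM rm ip" T C] assms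
  unfolding compact_ops_def by blast

lemma compact_opsD:
  "T \<in> compact_ops scM rm ip \<Longrightarrow> e > 0 \<Longrightarrow> \<exists>F\<in>theta_span scM rm ip. opdist_le T F e"
  unfolding compact_ops_def by blast

lemma module_map_compact_ops:
  assumes "T \<in> compact_ops scM rm ip"
  shows "module_map T"
proof -
  obtain F where "\<And>k. F k \<in> theta_span scM rm ip" and "\<And>z. (\<lambda>k. F k z) \<longlonglongrightarrow> T z"
    using opdist_le_approx_seq[of "theta_span scM rm ip" T] assms
    unfolding compact_ops_def by blast
  then show ?thesis
    by (blast intro: module_map_limit module_map_theta_span)
qed

lemma bounded_linear_compact_ops:
  assumes "T \<in> compact_ops scM rm ip"
  shows "bounded_linear T"
proof -
  obtain F where F: "F \<in> theta_span scM rm ip" and TF: "opdist_le T F 1"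
    using compact_opsD[OF assms zero_less_one] by blast
  obtain K where K: "\<And>z. norm (F z) \<le> norm z * K"
    using bounded_linear.bounded[OF bounded_linear_theta_span[OF F]] by blast
  have "norm (T z) \<le> norm z * (K + 1)" for z
  proof -
    have "norm (T z) \<le> norm (F z) + norm (T z - F z)"
      by (rule norm_triangle_sub)
    also have "\<dots> \<le> norm z * K + 1 * norm z"
      using K[of z] TF unfolding opdist_le_def by (intro add_mono) auto
    finally show ?thesis
      by (simp add: algebra_simps)
  qed
  moreover have "linear T"
    by (rule module_map_linear[OF module_map_compact_ops[OF assms]])
  ultimately show ?thesis
    by (intro bounded_linear_intro[where K = "K + 1"]) (simp_all add: linear_add linear_scale)
qed

lemma compact_ops_add:
  assumes "T \<in> compact_ops scM rm ip" and "S \<in> compact_ops scM rm ip"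
  shows "(\<lambda>z. T z + S z) \<in> compact_ops scM rm ip"
proof (rule compact_opsI[where C = 2])
  fix e :: real
  assume "e > 0"
  with assms obtain F G where "F \<in> theta_span scM rm ip" "opdist_le T F e"
    and "G \<in> theta_span scM rm ip" "opdist_le S G e"
    by (meson compact_opsD)
  then show "\<exists>H\<in>theta_span scM rm ip. opdist_le (\<lambda>z. T z + S z) H (2 * e)"
    using opdist_le_add theta_span_add by (metis mult_2)
qed

lemma compact_ops_scM:
  assumes "T \<in> compact_ops scM rm ip"
  shows "(\<lambda>z. scM c (T z)) \<in> compact_ops scM rm ip"
proof (rule compact_opsI[where C = "cmod c"])
  fix e :: real
  assume "e > 0"
  with assms obtain F where "F \<in> theta_span scM rm ip" and "opdist_le T F e"
    by (meson compact_opsD)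
  then have "opdist_le (scM c \<circ> T) (scM c \<circ> F) (cmod c * e)"
    by (intro opdist_le_comp_left linear_scM) (simp_all add: norm_scM mult.commute)
  with \<open>F \<in> theta_span scM rm ip\<close>
  show "\<exists>H\<in>theta_span scM rm ip. opdist_le (\<lambda>z. scM c (T z)) H (cmod c * e)"
    using theta_span_scM by (auto simp: comp_def)
qed

lemma compact_ops_comp:
  assumes "T \<in> compact_ops scM rm ip" and "S \<in> compact_ops scM rm ip"
  shows "T \<circ> S \<in> compact_ops scM rm ip"
proof -
  obtain K where "K \<ge> 0" and K: "\<And>z. norm (T z) \<le> norm z * K"
    using bounded_linear.nonneg_bounded[OF bounded_linear_compact_ops[OF assms(1)]] by blast
  show ?thesis
  proof (rule compact_opsI[where C = K])
    fix e :: real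
    assume "e > 0"
    with assms(2) obtain G where "G \<in> theta_span scM rm ip" and "opdist_le S G e"
      by (meson compact_opsD)
    then have "opdist_le (T \<circ> S) (T \<circ> G) (K * e)"
      using module_map_linear[OF module_map_compact_ops[OF assms(1)]] K \<open>K \<ge> 0\<close>
      by (intro opdist_le_comp_left)
    moreover have "T \<circ> G \<in> theta_span scM rm ip"
      using module_map_compact_ops[OF assms(1)] \<open>G \<in> theta_span scM rm ip\<close> by (rule theta_span_comp)
    ultimately show "\<exists>H\<in>theta_span scM rm ip. opdist_le (T \<circ> S) H (K * e)"
      by blast
  qed
qed

lemma theta_in_theta_span: "theta x y \<in> theta_span scM rm ip"
proof (rule theta_spanI)
  show "theta x y = (\<lambda>z. \<Sum>i<Suc 0. scM 1 (rm x (ip y z)))"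
    using scM_of_real[of 1] by (simp add: fun_eq_iff theta_def)
qed

lemma theta_in_compact_ops: "theta x y \<in> compact_ops scM rm ip"
  using theta_in_theta_span theta_span_subset_compact_ops by blast

lemma theta_zero_left: "theta 0 y = (\<lambda>_. 0)"
  by (simp add: fun_eq_iff theta_def bounded_bilinear.zero_left[OF bounded_bilinear_rm])

lemma theta_add_left: "theta (x + x') y = (\<lambda>z. theta x y z + theta x' y z)"
  by (simp add: fun_eq_iff theta_def rm_add_left)

lemma theta_scM_left: "theta (scM c x) y = (\<lambda>z. scM c (theta x y z))"
  by (simp add: fun_eq_iff theta_def rm_scM)

lemma theta_rm_left: "theta (rm x a) y = theta x (rm y (st a))"
  by (simp add: fun_eq_iff theta_def ip_rm_left st_st rm_mult)

lemma comp_theta: "module_map T \<Longrightarrow> T \<circ> theta z y = theta (T z) y"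
  unfolding module_map_def by (simp add: fun_eq_iff theta_def)

lemma theta_self_neq_zero:
  assumes "x \<noteq> 0"
  shows "theta x x \<noteq> (\<lambda>_. 0)"
proof
  assume "theta x x = (\<lambda>_. 0)"
  then have "rm x (ip x x) = 0"
    unfolding theta_def by metis
  then have "st (ip x x) * ip x x = 0"
    using ip_rm_right[of x x "ip x x"] ip_swap[of x x] by (simp add: linear_0[OF linear_ip_right])
  then have "ip x x = 0"
    using norm_st_mult_self[of "ip x x"] by simp
  with assms show False
    using ip_self_eq_0 by blast
qed

lemma opdist_le_theta_left: "opdist_le (theta x y) (theta x' y) (4 * norm y * norm (x' - x))"
  unfolding opdist_le_def
proof
  fix z
  have "norm (theta x y z - theta x' y z) = norm (rm (x - x') (ip y z))"
    by (simp add: theta_def bounded_bilinear.diff_left[OF bounded_bilinear_rm])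
  also have "\<dots> \<le> norm (x' - x) * norm (ip y z)"
    using norm_rm_le[of "x - x'" "ip y z"] by (simp only: norm_minus_commute)
  also have "\<dots> \<le> norm (x' - x) * (4 * norm y * norm z)"
    by (intro mult_left_mono norm_ip_le) simp
  finally show "norm (theta x y z - theta x' y z) \<le> 4 * norm y * norm (x' - x) * norm z"
    by (simp add: mult_ac)
qed

section \<open>Essential submodules and essential right ideals\<close>

lemma theta_in_J_of:
  assumes "closed_submodule scM rm N" and "x \<in> N"
  shows "theta x y \<in> J_of scM rm ip N"
proof -
  have "range (theta x y) \<subseteq> N"
    using assms unfolding closed_submodule_def theta_def by blast
  then show ?thesis
    unfolding J_of_def using theta_in_compact_ops by blast
qed

lemma closed_right_ideal_J_of:
  assumes N: "closed_submodule scM rm N"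
  shows "closed_right_ideal scM rm ip (J_of scM rm ip N)"
  unfolding closed_right_ideal_def
proof (intro conjI ballI allI impI)
  have "closed N" and "0 \<in> N" and add: "\<And>x y. x \<in> N \<Longrightarrow> y \<in> N \<Longrightarrow> x + y \<in> N"
    and scM: "\<And>c x. x \<in> N \<Longrightarrow> scM c x \<in> N"
    using N unfolding closed_submodule_def by auto
  show "J_of scM rm ip N \<subseteq> compact_ops scM rm ip"
    unfolding J_of_def by blast
  show "(\<lambda>_. 0) \<in> J_of scM rm ip N"
    using theta_in_J_of[OF N \<open>0 \<in> N\<close>] by (simp add: theta_zero_left)
  show "(\<lambda>z. T z + S z) \<in> J_of scM rm ip N"
    if "T \<in> J_of scM rm ip N" and "S \<in> J_of scM rm ip N" for T S
    using that compact_ops_add add unfolding J_of_def image_subset_iff by blast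
  show "(\<lambda>z. scM c (T z)) \<in> J_of scM rm ip N" if "T \<in> J_of scM rm ip N" for c T
    using that compact_ops_scM scM unfolding J_of_def image_subset_iff by blast
  show "T \<circ> S \<in> J_of scM rm ip N"
    if "T \<in> J_of scM rm ip N" and "S \<in> compact_ops scM rm ip" for T S
    using that compact_ops_comp unfolding J_of_def by auto
  show "T \<in> J_of scM rm ip N"
    if T: "T \<in> compact_ops scM rm ip"
      and approx: "\<forall>e>0. \<exists>S\<in>J_of scM rm ip N. opdist_le T S e"
    for T
  proof -
    obtain F where F: "\<And>k. F k \<in> J_of scM rm ip N" and lim: "\<And>z. (\<lambda>k. F k z) \<longlonglongrightarrow> T z"
      using opdist_le_approx_seq[OF approx] by blast
    have "F k z \<in> N" for k z
      using F[of k] unfolding J_of_def by blast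
    then have "T z \<in> N" for z
      by (rule closed_sequentially[OF \<open>closed N\<close> _ lim])
    with T show ?thesis
      unfolding J_of_def by blast
  qed
qed

definition theta_vectors :: "('m \<Rightarrow> 'm) set \<Rightarrow> 'm set" where
  "theta_vectors K = {x. \<forall>y. theta x y \<in> K}"

lemma closed_theta_vectors:
  assumes K: "closed_right_ideal scM rm ip K"
  shows "closed (theta_vectors K)"
  unfolding closed_sequential_limits
proof (intro allI impI, elim conjE)
  fix xs x
  assume xs: "\<forall>n. xs n \<in> theta_vectors K" and "xs \<longlonglongrightarrow> x"
  show "x \<in> theta_vectors K"
    unfolding theta_vectors_def
  proof (intro CollectI allI)
    fix y :: 'm
    have "(\<lambda>n. norm (xs n - x)) \<longlonglongrightarrow> 0"
      using \<open>xs \<longlonglongrightarrow> x\<close> by (intro tendsto_norm_zero LIM_zero)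
    then have "(\<lambda>n. 4 * norm y * norm (xs n - x)) \<longlonglongrightarrow> 0"
      by (rule tendsto_mult_right_zero)
    then have "\<forall>e>0. \<exists>S\<in>K. opdist_le (theta x y) S e"
      using xs unfolding theta_vectors_def
      by (intro opdist_le_approx_of_tendsto[where F = "\<lambda>n. theta (xs n) y",
            OF _ opdist_le_theta_left]) auto
    with K show "theta x y \<in> K"
      using theta_in_compact_ops unfolding closed_right_ideal_def by blast
  qed
qed

lemma closed_submodule_theta_vectors:
  assumes K: "closed_right_ideal scM rm ip K"
  shows "closed_submodule scM rm (theta_vectors K)"
proof -
  have "(\<lambda>_. 0) \<in> K" and add: "\<And>T S. T \<in> K \<Longrightarrow> S \<in> K \<Longrightarrow> (\<lambda>z. T z + S z) \<in> K"
    and scM: "\<And>c T. T \<in> K \<Longrightarrow> (\<lambda>z. scM c (T z)) \<in> K"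
    using K unfolding closed_right_ideal_def by auto
  show ?thesis
    unfolding closed_submodule_def
  proof (intro conjI ballI allI closed_theta_vectors[OF K])
    show "0 \<in> theta_vectors K"
      using \<open>(\<lambda>_. 0) \<in> K\<close> by (simp add: theta_vectors_def theta_zero_left)
    show "x + x' \<in> theta_vectors K" if "x \<in> theta_vectors K" and "x' \<in> theta_vectors K" for x x'
      using that add by (simp add: theta_vectors_def theta_add_left)
    show "scM c x \<in> theta_vectors K" if "x \<in> theta_vectors K" for c x
      using that scM by (simp add: theta_vectors_def theta_scM_left)
    show "rm x a \<in> theta_vectors K" if "x \<in> theta_vectors K" for x a
      using that by (simp add: theta_vectors_def theta_rm_left)
  qed
qed

lemma range_subset_theta_vectors:
  assumes K: "closed_right_ideal scM rm ip K" and "T \<in> K"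
  shows "range T \<subseteq> theta_vectors K"
proof -
  have "T \<in> compact_ops scM rm ip"
    using K \<open>T \<in> K\<close> unfolding closed_right_ideal_def by blast
  then have "theta (T z) y = T \<circ> theta z y" for z y
    by (simp add: comp_theta module_map_compact_ops)
  then show ?thesis
    using K \<open>T \<in> K\<close> theta_in_compact_ops
    unfolding theta_vectors_def closed_right_ideal_def by auto
qed

lemma top_essential_J_of_if_top_essential:
  assumes N: "closed_submodule scM rm N" and ess: "top_essential_submodule scM rm N"
  shows "top_essential_right_ideal scM rm ip (J_of scM rm ip N)"
  unfolding top_essential_right_ideal_def
proof (intro allI impI, elim conjE)
  fix K
  assume K: "closed_right_ideal scM rm ip K" and "K \<noteq> {\<lambda>_. 0}"
  moreover have "(\<lambda>_. 0) \<in> K"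
    using K unfolding closed_right_ideal_def by blast
  ultimately obtain T z where "T \<in> K" and "T z \<noteq> 0"
    by blast
  then have "theta_vectors K \<noteq> {0}"
    using range_subset_theta_vectors[OF K] by blast
  then have "N \<inter> theta_vectors K \<noteq> {0}"
    using ess closed_submodule_theta_vectors[OF K] unfolding top_essential_submodule_def by blast
  moreover have "0 \<in> N \<inter> theta_vectors K"
    using N closed_submodule_theta_vectors[OF K] unfolding closed_submodule_def by blast
  ultimately obtain x where "x \<in> N" and "x \<in> theta_vectors K" and "x \<noteq> 0"
    by blast
  then have "theta x x \<in> J_of scM rm ip N \<inter> K" and "theta x x \<noteq> (\<lambda>_. 0)"
    using theta_in_J_of[OF N] theta_self_neq_zero unfolding theta_vectors_def by auto
  then show "J_of scM rm ip N \<inter> K \<noteq> {\<lambda>_. 0}"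
    by blast
qed

lemma top_essential_if_top_essential_J_of:
  assumes N: "closed_submodule scM rm N"
    and ess: "top_essential_right_ideal scM rm ip (J_of scM rm ip N)"
  shows "top_essential_submodule scM rm N"
  unfolding top_essential_submodule_def
proof (intro allI impI, elim conjE)
  fix K
  assume K: "closed_submodule scM rm K" and "K \<noteq> {0}"
  moreover have "0 \<in> K"
    using K unfolding closed_submodule_def by blast
  ultimately obtain x where "x \<in> K" and "x \<noteq> 0"
    by blast
  then have "J_of scM rm ip K \<noteq> {\<lambda>_. 0}"
    using theta_in_J_of[OF K] theta_self_neq_zero by blast
  then have "J_of scM rm ip N \<inter> J_of scM rm ip K \<noteq> {\<lambda>_. 0}"
    using ess closed_right_ideal_J_of[OF K] unfolding top_essential_right_ideal_def by blast
  moreover have "(\<lambda>_. 0) \<in> J_of scM rm ip N \<inter> J_of scM rm ip K"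
    using closed_right_ideal_J_of[OF N] closed_right_ideal_J_of[OF K]
    unfolding closed_right_ideal_def by blast
  ultimately obtain T z where "T \<in> J_of scM rm ip N" and "T \<in> J_of scM rm ip K" and "T z \<noteq> 0"
    by blast
  then show "N \<inter> K \<noteq> {0}"
    unfolding J_of_def by blast
qed

end

theorem mainTheorem2:
  fixes sc :: "complex \<Rightarrow> 'a::{real_normed_algebra,banach} \<Rightarrow> 'a"
    and st :: "'a \<Rightarrow> 'a"
    and scM :: "complex \<Rightarrow> 'm::banach \<Rightarrow> 'm"
    and rm :: "'m \<Rightarrow> 'a \<Rightarrow> 'm"
    and ip :: "'m \<Rightarrow> 'm \<Rightarrow> 'a"
    and N :: "'m set"
  assumes "hilbert_module sc st scM rm ip"
    and "closed_submodule scM rm N"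
  shows "top_essential_submodule scM rm N \<longleftrightarrow>
         top_essential_right_ideal scM rm ip (J_of scM rm ip N)"
proof -
  interpret hilbert_cstar_module sc st scM rm ip
    using assms(1) by (rule hilbert_module_imp_hilbert_cstar_module)
  show ?thesis
    using top_essential_J_of_if_top_essential[OF assms(2)] top_essential_if_top_essential_J_of[OF assms(2)]
    by blast
qed

end
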